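(* For every integer $t\ge 0$: $$A_3(9t+4,6,[3,1])\le 9t^2+6t+1+\left\lfloor\tfrac{t}{4}\right\rfloor,\quad A_3(9t+5,6,[3,1])\le 9t^2+7t+1+\left\lfloor\tfrac{t+1}{4}\right\rfloor,\quad A_3(9t+7,6,[3,1])\le 9t^2+11t+3+\left\lfloor\tfrac{t+1}{2}\right\rfloor.$$
   Context: For a finite set $X$ with $|X|=n$, a ternary code of length $n$ is a subset $\mathcal C\subseteq\mathbb Z_3^X$; its elements are codewords. The Hamming distance between $u,v\in\mathbb Z_3^X$ is the number of $x\in X$ with $u_x\ne v_x$. A vector $u$ has composition $[w_1,w_2]$ if exactly $w_1$ of its coordinates equal $1$ and exactly $w_2$ equal $2$ (all others $0$). An $(n,d,[w_1,w_2])_3$-code is a ternary code of length $n$ in which every codeword has composition $[w_1,w_2]$ and any two distinct codewords are at Hamming distance at least $d$. $A_3(n,d,[w_1,w_2])$ denotes the maximum number of codewords of an $(n,d,[w_1,w_2])_3$-code. *)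

theory Defs
  imports Main
begin

definition ternary_words :: "nat \<Rightarrow> nat list set" where
  "ternary_words n = {u. length u = n \<and> set u \<subseteq> {0,1,2}}"

definition hamming :: "nat list \<Rightarrow> nat list \<Rightarrow> nat" where
  "hamming u v = card {i. i < length u \<and> u ! i \<noteq> v ! i}"

definition has_composition :: "nat list \<Rightarrow> nat \<Rightarrow> nat \<Rightarrow> bool" where
  "has_composition u w1 w2 \<longleftrightarrow>
     card {i. i < length u \<and> u ! i = 1} = w1 \<and> card {i. i < length u \<and> u ! i = 2} = w2"

definition const_comp_code :: "nat \<Rightarrow> nat \<Rightarrow> nat \<Rightarrow> nat \<Rightarrow> nat list set \<Rightarrow> bool" where
  "const_comp_code n d w1 w2 C \<longleftrightarrow>
     C \<subseteq> ternary_words n \<and> (\<forall>u\<in>C. has_composition u w1 w2) \<and>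
     (\<forall>u\<in>C. \<forall>v\<in>C. u \<noteq> v \<longrightarrow> hamming u v \<ge> d)"

definition A3 :: "nat \<Rightarrow> nat \<Rightarrow> nat \<Rightarrow> nat \<Rightarrow> nat" where
  "A3 n d w1 w2 = Max (card ` {C. const_comp_code n d w1 w2 C})"

end

theory Submission
  imports Defs
begin

text \<open>
  Every codeword of an \<open>(n,6,[3,1])\<^sub>3\<close>-code has a support of size 4, and two distinct codewords
  sharing two support positions must disagree at both of them. Fix a coordinate x, and let r and
  q count the codewords with 1, resp. 2, at x. The supports of the r codewords with 1 at x are
  pairwise disjoint outside x, so \<open>3r \<le> n - 1\<close>. Outside x, a codeword with 1 at x has two
  1-positions and a codeword with 2 at x has three; these sets are again pairwise disjoint, so
  \<open>2r + 3q \<le> n - 1\<close>. Hence \<open>9(r + q) \<le> 4(n - 1)\<close>, and counting the pairs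
  (coordinate, codeword) with the coordinate in the support yields
  \<open>4 |C| \<le> n \<lfloor>4(n - 1)/9\<rfloor>\<close>, which specialises to the three bounds.
\<close>

definition support :: "nat list \<Rightarrow> nat set" where
  "support u = {i. i < length u \<and> u ! i \<noteq> 0}"

lemma finite_support [simp]: "finite (support u)"
  unfolding support_def by simp

lemma finite_ternary_words: "finite (ternary_words n)"
proof -
  have "ternary_words n = {xs. set xs \<subseteq> {0,1,2} \<and> length xs = n}"
    unfolding ternary_words_def by auto
  then show ?thesis by (simp add: finite_lists_length_eq)
qed

lemma A3_le:
  assumes "\<And>C. const_comp_code n d w1 w2 C \<Longrightarrow> card C \<le> B"
  shows "A3 n d w1 w2 \<le> B"
proof -
  have "{C. const_comp_code n d w1 w2 C} \<subseteq> Pow (ternary_words n)"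
    unfolding const_comp_code_def by auto
  then have "finite {C. const_comp_code n d w1 w2 C}"
    using finite_ternary_words by (meson finite_Pow_iff finite_subset)
  moreover have "{} \<in> {C. const_comp_code n d w1 w2 C}"
    unfolding const_comp_code_def by simp
  ultimately show ?thesis
    unfolding A3_def using assms by (intro Max.boundedI) auto
qed

lemma sum_card_le_card_if_disjoint:
  assumes "finite A" "finite S" "\<And>a. a \<in> A \<Longrightarrow> F a \<subseteq> S"
    and "\<And>a b. a \<in> A \<Longrightarrow> b \<in> A \<Longrightarrow> a \<noteq> b \<Longrightarrow> F a \<inter> F b = {}"
  shows "(\<Sum>a\<in>A. card (F a)) \<le> card S"
proof -
  have "finite (F a)" if "a \<in> A" for a
    using assms(2,3) that finite_subset by blast
  then have "(\<Sum>a\<in>A. card (F a)) = card (\<Union>(F ` A))"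
    using assms(1,4) by (simp add: card_UN_disjoint)
  also have "\<dots> \<le> card S"
    using assms(2,3) by (intro card_mono) auto
  finally show ?thesis .
qed

lemma card_support_eq:
  assumes "u \<in> ternary_words n" "has_composition u w1 w2"
  shows "card (support u) = w1 + w2"
proof -
  have "support u = {i. i < length u \<and> u ! i = 1} \<union> {i. i < length u \<and> u ! i = 2}"
    using assms(1) nth_mem by (fastforce simp: support_def ternary_words_def)
  then show ?thesis
    using assms(2) by (simp add: has_composition_def card_Un_disjoint disjoint_iff)
qed

lemma hamming_le_if_supports_overlap:
  assumes "length v = length u" "card (support u) = w" "card (support v) = w"
    and "i \<noteq> j" "{i, j} \<subseteq> support u \<inter> support v" "u ! i = v ! i"
  shows "hamming u v \<le> 2 * w - 3"
proof -
  have "2 \<le> card (support u \<inter> support v)"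
    using card_mono[OF _ assms(5)] assms(4) by simp
  moreover have "card (support u \<union> support v) + card (support u \<inter> support v) = 2 * w"
    using assms(2,3) by (simp add: card_Un_Int[symmetric])
  ultimately have "card (support u \<union> support v) \<le> 2 * w - 2"
    by linarith
  moreover have "i \<in> support u \<union> support v"
    using assms(5) by auto
  ultimately have "card (support u \<union> support v - {i}) \<le> 2 * w - 3"
    by (simp add: card_Diff_singleton)
  moreover have "{k. k < length u \<and> u ! k \<noteq> v ! k} \<subseteq> support u \<union> support v - {i}"
    using assms(1,6) by (auto simp: support_def)
  ultimately show ?thesis
    unfolding hamming_def by (meson card_mono finite_Diff finite_UnI finite_support order_trans)
qed

context
  fixes n :: nat and C :: "nat list set"
  assumes code: "const_comp_code n 6 3 1 C"
begin

lemma finite_code: "finite C"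
  using code finite_ternary_words unfolding const_comp_code_def by (meson finite_subset)

lemma codeword_in_ternary_words: "u \<in> C \<Longrightarrow> u \<in> ternary_words n"
  using code unfolding const_comp_code_def by blast

lemma codeword_composition: "u \<in> C \<Longrightarrow> has_composition u 3 1"
  using code unfolding const_comp_code_def by blast

lemma codeword_length: "u \<in> C \<Longrightarrow> length u = n"
  using codeword_in_ternary_words by (simp add: ternary_words_def)

lemma codeword_nth:
  assumes "u \<in> C" "i < n"
  shows "u ! i \<in> {0, 1, 2}"
proof -
  have "u ! i \<in> set u"
    using assms by (simp add: codeword_length)
  then show ?thesis
    using codeword_in_ternary_words[OF assms(1)] unfolding ternary_words_def by blast
qed

lemma card_support_codeword: "u \<in> C \<Longrightarrow> card (support u) = 4"
  using card_support_eq codeword_in_ternary_words codeword_composition by fastforce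

lemma card_codeword_ones: "u \<in> C \<Longrightarrow> card {i. i < n \<and> u ! i = 1} = 3"
  using codeword_composition codeword_length unfolding has_composition_def by blast

lemma codeword_eq_if_supports_overlap:
  assumes "u \<in> C" "v \<in> C" "i \<noteq> j" "{i, j} \<subseteq> support u \<inter> support v" "u ! i = v ! i"
  shows "u = v"
proof (rule ccontr)
  assume "u \<noteq> v"
  then have "6 \<le> hamming u v"
    using code assms(1,2) unfolding const_comp_code_def by blast
  moreover have "hamming u v \<le> 2 * 4 - 3"
  proof (rule hamming_le_if_supports_overlap[OF _ _ _ assms(3-5)])
    show "length v = length u"
      using assms(1,2) by (simp add: codeword_length)
    show "card (support u) = 4" "card (support v) = 4"
      using assms(1,2) by (simp_all add: card_support_codeword)
  qed
  ultimately show False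
    by simp
qed

lemma card_ones_at_le:
  assumes x: "x < n"
  shows "3 * card {u \<in> C. u ! x = 1} \<le> n - 1"
proof -
  let ?R = "{u \<in> C. u ! x = 1}"
  have x_support: "x \<in> support u" if "u \<in> ?R" for u
    using that x by (simp add: support_def codeword_length)
  have "(\<Sum>u\<in>?R. card (support u - {x})) \<le> card ({..<n} - {x})"
  proof (rule sum_card_le_card_if_disjoint)
    fix u v assume uv: "u \<in> ?R" "v \<in> ?R" "u \<noteq> v"
    show "(support u - {x}) \<inter> (support v - {x}) = {}"
    proof (rule ccontr)
      assume "(support u - {x}) \<inter> (support v - {x}) \<noteq> {}"
      then obtain y where "y \<noteq> x" "y \<in> support u" "y \<in> support v"
        by blast
      with uv x_support show False
        using codeword_eq_if_supports_overlap[of u v x y] by simp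
    qed
  next
    fix u assume "u \<in> ?R"
    then show "support u - {x} \<subseteq> {..<n} - {x}"
      by (auto simp: support_def codeword_length)
  qed (simp_all add: finite_code)
  moreover have "card (support u - {x}) = 3" if "u \<in> ?R" for u
    using that x_support by (simp add: card_Diff_singleton card_support_codeword)
  ultimately show ?thesis
    using x by simp
qed

lemma weighted_count_at_le:
  assumes x: "x < n"
  shows "2 * card {u \<in> C. u ! x = 1} + 3 * card {u \<in> C. u ! x = 2} \<le> n - 1"
proof -
  let ?R = "{u \<in> C. u ! x = 1}" and ?Q = "{u \<in> C. u ! x = 2}"
  define ones where "ones u = {i. i < n \<and> u ! i = 1}" for u :: "nat list"
  have x_support: "x \<in> support u" if "u \<in> ?R \<union> ?Q" for u
    using that x by (auto simp: support_def codeword_length)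
  have "(\<Sum>u\<in>?R \<union> ?Q. card (ones u - {x})) \<le> card ({..<n} - {x})"
  proof (rule sum_card_le_card_if_disjoint)
    fix u v assume uv: "u \<in> ?R \<union> ?Q" "v \<in> ?R \<union> ?Q" "u \<noteq> v"
    show "(ones u - {x}) \<inter> (ones v - {x}) = {}"
    proof (rule ccontr)
      assume "(ones u - {x}) \<inter> (ones v - {x}) \<noteq> {}"
      then obtain y where y: "y \<noteq> x" "y \<in> ones u" "y \<in> ones v"
        by blast
      have uv_code: "u \<in> C" "v \<in> C"
        using uv by auto
      have "y \<in> support u" "y \<in> support v" "u ! y = v ! y"
        using y uv_code by (simp_all add: ones_def support_def codeword_length)
      moreover have "x \<in> support u" "x \<in> support v"
        using uv x_support by blast+
      ultimately show False
        using uv_code uv(3) y(1) codeword_eq_if_supports_overlap[of u v y x] by simp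
    qed
  qed (auto simp: finite_code ones_def)
  moreover have "card (ones u - {x}) = 2" if "u \<in> ?R" for u
    using that x card_codeword_ones[of u] by (simp add: ones_def card_Diff_singleton)
  moreover have "card (ones u - {x}) = 3" if "u \<in> ?Q" for u
    using that card_codeword_ones[of u] by (simp add: ones_def)
  moreover have "?R \<inter> ?Q = {}"
    by auto
  ultimately show ?thesis
    using x finite_code by (simp add: sum.union_disjoint)
qed

lemma card_codewords_at_le:
  assumes x: "x < n"
  shows "card {u \<in> C. x \<in> support u} \<le> 4 * (n - 1) div 9"
proof -
  have "{u \<in> C. x \<in> support u} = {u \<in> C. u ! x = 1} \<union> {u \<in> C. u ! x = 2}"
    using codeword_nth x by (fastforce simp: support_def codeword_length)
  then have "card {u \<in> C. x \<in> support u} = card {u \<in> C. u ! x = 1} + card {u \<in> C. u ! x = 2}"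
    using finite_code by (simp add: card_Un_disjoint disjoint_iff)
  then show ?thesis
    using card_ones_at_le[OF x] weighted_count_at_le[OF x] by linarith
qed

lemma card_code_le: "4 * card C \<le> n * (4 * (n - 1) div 9)"
proof -
  have "(\<Sum>x<n. card {u \<in> C. x \<in> support u}) = 4 * card C"
    using finite_code card_support_codeword
    by (intro sum_multicount) (auto simp: support_def codeword_length)
  moreover have "(\<Sum>x<n. card {u \<in> C. x \<in> support u}) \<le> (\<Sum>x<n. 4 * (n - 1) div 9)"
    using card_codewords_at_le by (intro sum_mono) simp
  ultimately show ?thesis
    by simp
qed

end

lemma A3_6_3_1_le: "A3 n 6 3 1 \<le> n * (4 * (n - 1) div 9) div 4"
  using card_code_le by (intro A3_le) (metis div_le_mono div_mult_self1_is_m zero_less_numeral)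

theorem mainTheorem3:
  fixes t :: nat
  shows "A3 (9*t+4) 6 3 1 \<le> 9*t^2 + 6*t + 1 + t div 4
       \<and> A3 (9*t+5) 6 3 1 \<le> 9*t^2 + 7*t + 1 + (t+1) div 4
       \<and> A3 (9*t+7) 6 3 1 \<le> 9*t^2 + 11*t + 3 + (t+1) div 2"
proof -
  have "4*(9*t+4-1) div 9 = 4*t+1" "4*(9*t+5-1) div 9 = 4*t+1" "4*(9*t+7-1) div 9 = 4*t+2"
    by simp_all
  moreover have "(9*t+4) * (4*t+1) = t + 4 * (9*t^2 + 6*t + 1)"
    and "(9*t+5) * (4*t+1) = (t+1) + 4 * (9*t^2 + 7*t + 1)"
    and "(9*t+7) * (4*t+2) = 2*(t+1) + 4 * (9*t^2 + 11*t + 3)"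
    by (simp_all add: algebra_simps power2_eq_square)
  ultimately have "(9*t+4) * (4*(9*t+4-1) div 9) div 4 = 9*t^2 + 6*t + 1 + t div 4"
    and "(9*t+5) * (4*(9*t+5-1) div 9) div 4 = 9*t^2 + 7*t + 1 + (t+1) div 4"
    and "(9*t+7) * (4*(9*t+7-1) div 9) div 4 = 9*t^2 + 11*t + 3 + (t+1) div 2"
    by simp_all
  then show ?thesis
    using A3_6_3_1_le[of "9*t+4"] A3_6_3_1_le[of "9*t+5"] A3_6_3_1_le[of "9*t+7"]
    by (simp only:)
qed

end
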